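(* Consider the self-attention dynamics without LayerNorm, $X^{(t+1)}=A^{(t)}X^{(t)}W_V^{(t)}$, started from an arbitrary $X^{(0)}\in\mathbb{R}^{N\times d}$, and assume \textbf{A1}, \textbf{A2} and \textbf{A3}. If $\mathcal{G}$ is quasi-strongly connected with radius $r$, then there exists $\epsilon>0$ such that for all $t\ge 0$, $$A^{(t)}_{i,j}\ge \epsilon\quad\text{for all }(j,i)\in E(\mathcal{G}),$$ and there exists $C>0$ such that $$\mu(X^{(t)})\le C\,(1-\epsilon^r)^{t/r}\qquad\text{for all }t\ge 0,$$ i.e. all rows (tokens) of $X^{(t)}$ converge exponentially to a common vector.
   Context: Tokens are the rows of $X\in\mathbb{R}^{N\times d}$. An attention mask is a directed graph $\mathcal{G}$ on the node set $[N]=\{1,\dots,N\}$ with edge set $E(\mathcal{G})$; an edge $(j,i)\in E(\mathcal{G})$ means token $i$ attends to token $j$, and $\mathcal{N}_i=\{k:(k,i)\in E(\mathcal{G})\}$. For $R\in\mathbb{R}^{N\times N}$, the masked softmax is $\mathrm{softmax}_{\mathcal{G}}(R)_{ij}=\exp(R_{ij})/\sum_{k\in\mathcal{N}_i}\exp(R_{ik})$ if $(j,i)\in E(\mathcal{G})$ and $0$ otherwise. The attention matrices are $A^{(t)}=\mathrm{softmax}_{\mathcal{G}}\big(X^{(t)}W_Q^{(t)}(X^{(t)}W_K^{(t)})^\top/\sqrt{d_{QK}}\big)$ with a fixed constant $d_{QK}>0$, query/key matrices $W_Q^{(t)},W_K^{(t)}\in\mathbb{R}^{d\times d'}$ and value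 matrices $W_V^{(t)}\in\mathbb{R}^{d\times d}$; the mask $\mathcal{G}$ is the same for all $t$. Assumptions: \textbf{A1}: $(i,i)\in E(\mathcal{G})$ for every $i\in[N]$. \textbf{A2}: there is a constant $C'$ with $\max\{\|W_Q^{(t)}\|_2,\|W_K^{(t)}\|_2\}\le C'$ for all $t$. \textbf{A3}: the sequence $\big\{\|W_V^{(0)}W_V^{(1)}\cdots W_V^{(k)}\|_2\big\}_{k\ge0}$ is bounded. Similarity measure: $\mu(X)=\|X-\mathbf{1}\mathbf{1}^\top X/N\|_F$, where $\mathbf{1}\in\mathbb{R}^N$ is the all-ones vector. Graph notions: $v$ is reachable from $u$ if there is a directed path from $u$ to $v$; a center node is a node from which every node is reachable; $\mathcal{G}$ is quasi-strongly connected if it has at least one center node. The distance $\mathrm{dist}(u,v)$ is the length of a shortest directed path from $u$ to $v$; the radius of a quasi-strongly connected graph is $\min_{c\text{ center}}\max_{v}\mathrm{dist}(c,v)$. *)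

theory Defs
  imports "HOL-Analysis.Analysis"
begin

text \<open>Matrices are type-indexed: an N x d matrix is real^'d^'n (rows indexed by 'n).
  The mask is an edge set E :: ('n * 'n) set; (j,i) \<in> E means token i attends to token j.\<close>

definition masked_softmax :: "('n::finite \<times> 'n) set \<Rightarrow> real^'n^'n \<Rightarrow> real^'n^'n" where
  "masked_softmax E R = (\<chi> i j. if (j, i) \<in> E
      then exp (R $ i $ j) / (\<Sum>k\<in>{k. (k, i) \<in> E}. exp (R $ i $ k)) else 0)"

definition attn_matrix ::
  "('n::finite \<times> 'n) set \<Rightarrow> real \<Rightarrow> real^'d^'n \<Rightarrow> real^'k^'d \<Rightarrow> real^'k^'d \<Rightarrow> real^'n^'n" where
  "attn_matrix E dQK X WQ WK =
     masked_softmax E ((1 / sqrt dQK) *\<^sub>R ((X ** WQ) ** transpose (X ** WK)))"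

definition spec_norm :: "real^'m^'n \<Rightarrow> real" where
  "spec_norm M = onorm (\<lambda>x. M *v x)"

fun mat_prod_upto :: "(nat \<Rightarrow> real^'d^'d) \<Rightarrow> nat \<Rightarrow> real^'d^'d" where
  "mat_prod_upto W 0 = W 0"
| "mat_prod_upto W (Suc k) = mat_prod_upto W k ** W (Suc k)"

text \<open>mu(X) = || X - 1 1^T X / N ||_F (the norm on real^'d^'n is the Frobenius norm).\<close>
definition mu :: "real^'d^'n::finite \<Rightarrow> real" where
  "mu X = norm (\<chi> i j. X $ i $ j - (\<Sum>k\<in>UNIV. X $ k $ j) / real CARD('n))"

definition reachable :: "('n \<times> 'n) set \<Rightarrow> 'n \<Rightarrow> 'n \<Rightarrow> bool" where
  "reachable E u v \<longleftrightarrow> (u, v) \<in> E\<^sup>*"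

definition is_center :: "('n \<times> 'n) set \<Rightarrow> 'n \<Rightarrow> bool" where
  "is_center E c \<longleftrightarrow> (\<forall>v. reachable E c v)"

definition quasi_strongly_connected :: "('n \<times> 'n) set \<Rightarrow> bool" where
  "quasi_strongly_connected E \<longleftrightarrow> (\<exists>c. is_center E c)"

definition gdist :: "('n \<times> 'n) set \<Rightarrow> 'n \<Rightarrow> 'n \<Rightarrow> nat" where
  "gdist E u v = (LEAST k. (u, v) \<in> E ^^ k)"

definition radius :: "('n::finite \<times> 'n) set \<Rightarrow> nat" where
  "radius E = Min ((\<lambda>c. Max (range (gdist E c))) ` {c. is_center E c})"

end

theory Submission
  imports Defs
begin

text \<open>
  Without LayerNorm the dynamics factor as X(t) = P(t) X(0) V(t), where
  P(t) = A(t-1) \<cdots> A(0) is a product of row-stochastic matrices and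
  V(t) = W_V(0) \<cdots> W_V(t-1) is bounded by A3. Since P(t) is stochastic, the rows of
  P(t) X(0) stay bounded, so by A2 all attention logits are bounded and every unmasked
  softmax entry is at least some \<open>\<epsilon> > 0\<close>. Multiplying r consecutive attention matrices
  then gives a matrix whose column at a center c is \<open>\<ge> \<epsilon>^r\<close> (every node is reached from c
  by a path of length exactly r, thanks to the self-loops), so each window of length r
  shrinks the oscillation max - min of every column of P(t) X(0) by the factor
  \<open>1 - \<epsilon>^r\<close>. Finally \<open>\<mu>\<close> of X(t) is bounded by the column oscillations of P(t) X(0)
  times the bound on V(t).
\<close>

section \<open>Row-stochastic matrices\<close>

definition row_stochastic :: "real^'n::finite^'m \<Rightarrow> bool" where
  "row_stochastic B \<longleftrightarrow> (\<forall>i j. 0 \<le> B $ i $ j) \<and> (\<forall>i. (\<Sum>j\<in>UNIV. B $ i $ j) = 1)"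

lemma row_stochastic_masked_softmax:
  fixes E :: "('n::finite \<times> 'n) set"
  assumes refl: "\<And>i. (i, i) \<in> E"
  shows "row_stochastic (masked_softmax E R)"
proof -
  have pos: "0 < (\<Sum>k\<in>{k. (k, i) \<in> E}. exp (R $ i $ k))" for i
    by (rule sum_pos2[of _ i]) (use refl in auto)
  have "(\<Sum>j\<in>UNIV. masked_softmax E R $ i $ j) = 1" for i
  proof -
    have "(\<Sum>j\<in>UNIV. masked_softmax E R $ i $ j)
       = (\<Sum>j\<in>{j. (j, i) \<in> E}. exp (R $ i $ j) / (\<Sum>k\<in>{k. (k, i) \<in> E}. exp (R $ i $ k)))"
      unfolding masked_softmax_def by (simp add: sum.If_cases)
    also have "\<dots> = 1"
      using pos[of i] by (simp add: sum_divide_distrib[symmetric])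
    finally show ?thesis .
  qed
  moreover have "0 \<le> masked_softmax E R $ i $ j" for i j
    using pos[of i] unfolding masked_softmax_def by simp
  ultimately show ?thesis
    unfolding row_stochastic_def by auto
qed

lemma row_stochastic_mult:
  assumes "row_stochastic A" "row_stochastic B"
  shows "row_stochastic (A ** B)"
proof -
  have "(\<Sum>j\<in>UNIV. (A ** B) $ i $ j) = 1" for i
  proof -
    have "(\<Sum>j\<in>UNIV. (A ** B) $ i $ j) = (\<Sum>k\<in>UNIV. A $ i $ k * (\<Sum>j\<in>UNIV. B $ k $ j))"
      by (simp add: matrix_matrix_mult_def sum_distrib_left) (rule sum.swap)
    also have "\<dots> = 1"
      using assms unfolding row_stochastic_def by simp
    finally show ?thesis .
  qed
  moreover have "0 \<le> (A ** B) $ i $ j" for i j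
    using assms unfolding row_stochastic_def matrix_matrix_mult_def by (auto intro!: sum_nonneg)
  ultimately show ?thesis
    unfolding row_stochastic_def by auto
qed

lemma row_stochastic_mat_1: "row_stochastic (mat 1 :: real^'n::finite^'n)"
  unfolding row_stochastic_def mat_def by (simp add: sum.delta)

lemma row_stochastic_convex_comb_norm_le:
  fixes Y :: "'a::real_normed_vector^'n::finite"
  assumes "row_stochastic A" "\<And>k. norm (Y $ k) \<le> M"
  shows "norm (\<Sum>k\<in>UNIV. A $ i $ k *\<^sub>R Y $ k) \<le> M"
proof -
  have "norm (\<Sum>k\<in>UNIV. A $ i $ k *\<^sub>R Y $ k) \<le> (\<Sum>k\<in>UNIV. A $ i $ k * norm (Y $ k))"
    using assms(1) unfolding row_stochastic_def by (intro norm_sum[THEN order_trans]) auto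
  also have "\<dots> \<le> (\<Sum>k\<in>UNIV. A $ i $ k * M)"
    using assms unfolding row_stochastic_def by (intro sum_mono mult_left_mono) auto
  also have "\<dots> = M"
    using assms(1) unfolding row_stochastic_def by (simp add: sum_distrib_right[symmetric])
  finally show ?thesis .
qed

lemma matrix_mult_row_eq_sum: "(A ** Y) $ i = (\<Sum>k\<in>UNIV. A $ i $ k *\<^sub>R Y $ k)"
  for A :: "real^'n::finite^'m" and Y :: "real^'p^'n"
  by (simp add: matrix_matrix_mult_def vec_eq_iff sum_component)

section \<open>Oscillation of a vector\<close>

definition osc :: "real^'n::finite \<Rightarrow> real" where
  "osc y = Max (range (\<lambda>i. y $ i)) - Min (range (\<lambda>i. y $ i))"

lemma abs_diff_le_osc: "\<bar>y $ i - y $ k\<bar> \<le> osc y"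
proof -
  have "y $ i \<le> Max (range (\<lambda>i. y $ i))" "y $ k \<le> Max (range (\<lambda>i. y $ i))"
       "Min (range (\<lambda>i. y $ i)) \<le> y $ i" "Min (range (\<lambda>i. y $ i)) \<le> y $ k"
    by auto
  thus ?thesis
    unfolding osc_def by linarith
qed

lemma osc_nonneg: "0 \<le> osc y"
  using abs_diff_le_osc[of y undefined undefined] by simp

text \<open>
  If column c of a stochastic B is at least \<open>\<delta>\<close>, every row of B puts weight \<open>\<delta>\<close> on the common
  value \<open>y $ c\<close> and a remaining weight \<open>1 - \<delta>\<close> inside [min y, max y].
\<close>
lemma osc_mult_le:
  fixes B :: "real^'n::finite^'m::finite"
  assumes "row_stochastic B" "0 \<le> \<delta>" "\<And>i. \<delta> \<le> B $ i $ c"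
  shows "osc (B *v y) \<le> (1 - \<delta>) * osc y"
proof -
  define M where "M = Max (range (\<lambda>i. y $ i))"
  define m where "m = Min (range (\<lambda>i. y $ i))"
  have y_bounds: "y $ l \<le> M" "m \<le> y $ l" for l
    unfolding M_def m_def by auto
  have bounds: "\<delta> * y $ c + (1 - \<delta>) * m \<le> (B *v y) $ i \<and> (B *v y) $ i \<le> \<delta> * y $ c + (1 - \<delta>) * M"
    for i
  proof -
    define w where "w l = B $ i $ l - (if l = c then \<delta> else 0)" for l
    have w_nonneg: "0 \<le> w l" for l
      using assms unfolding w_def row_stochastic_def by auto
    have w_sum: "(\<Sum>l\<in>UNIV. w l) = 1 - \<delta>"
      using assms(1) unfolding w_def row_stochastic_def by (simp add: sum_subtractf)
    have split: "(B *v y) $ i = \<delta> * y $ c + (\<Sum>l\<in>UNIV. w l * y $ l)"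
      unfolding w_def matrix_vector_mult_def
      by (simp add: left_diff_distrib sum_subtractf if_distrib[of "\<lambda>x. x * _"] sum.If_cases)
    have "(\<Sum>l\<in>UNIV. w l * y $ l) \<le> (\<Sum>l\<in>UNIV. w l * M)"
      by (rule sum_mono) (simp add: mult_left_mono w_nonneg y_bounds)
    moreover have "(\<Sum>l\<in>UNIV. w l * m) \<le> (\<Sum>l\<in>UNIV. w l * y $ l)"
      by (rule sum_mono) (simp add: mult_left_mono w_nonneg y_bounds)
    ultimately show ?thesis
      using w_sum unfolding split by (simp add: sum_distrib_right[symmetric])
  qed
  have "Max (range (\<lambda>i. (B *v y) $ i)) \<le> \<delta> * y $ c + (1 - \<delta>) * M"
    using bounds by auto
  moreover have "\<delta> * y $ c + (1 - \<delta>) * m \<le> Min (range (\<lambda>i. (B *v y) $ i))"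
    using bounds by auto
  ultimately show ?thesis
    unfolding osc_def M_def[symmetric] m_def[symmetric] by argo
qed

lemma osc_row_stochastic_mult_le: "row_stochastic B \<Longrightarrow> osc (B *v y) \<le> osc y"
  using osc_mult_le[of B 0 undefined y] by (simp add: row_stochastic_def)

fun left_prod :: "(nat \<Rightarrow> real^'n::finite^'n) \<Rightarrow> nat \<Rightarrow> nat \<Rightarrow> real^'n^'n" where
  "left_prod A t 0 = mat 1"
| "left_prod A t (Suc m) = A (t + m) ** left_prod A t m"

lemma left_prod_add: "left_prod A t (m + n) = left_prod A (t + m) n ** left_prod A t m"
  by (induction n) (simp_all add: matrix_mul_assoc add.assoc)

lemma row_stochastic_left_prod: "(\<And>t. row_stochastic (A t)) \<Longrightarrow> row_stochastic (left_prod A t m)"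
  by (induction m) (simp_all add: row_stochastic_mat_1 row_stochastic_mult)

lemma left_prod_entry_ge_power:
  assumes stoch: "\<And>t. row_stochastic (A t)" and "0 \<le> \<epsilon>"
    and lower: "\<And>t i j. (j, i) \<in> E \<Longrightarrow> \<epsilon> \<le> A t $ i $ j"
  shows "(c, i) \<in> E ^^ m \<Longrightarrow> \<epsilon> ^ m \<le> left_prod A t m $ i $ c"
proof (induction m arbitrary: i)
  case 0
  then show ?case by (simp add: mat_def)
next
  case (Suc m)
  then obtain k where k: "(c, k) \<in> E ^^ m" "(k, i) \<in> E"
    by auto
  have nonneg: "0 \<le> A (t + m) $ i $ l" "0 \<le> left_prod A t m $ l $ c" for l
    using stoch row_stochastic_left_prod[of A t m, OF stoch] unfolding row_stochastic_def by auto
  have "\<epsilon> ^ Suc m = \<epsilon> * \<epsilon> ^ m"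
    by simp
  also have "\<dots> \<le> A (t + m) $ i $ k * left_prod A t m $ k $ c"
    using \<open>0 \<le> \<epsilon>\<close> nonneg by (intro mult_mono lower k Suc.IH) auto
  also have "\<dots> \<le> (\<Sum>l\<in>UNIV. A (t + m) $ i $ l * left_prod A t m $ l $ c)"
    by (rule member_le_sum) (use nonneg in auto)
  finally show ?case
    by (simp add: matrix_matrix_mult_def)
qed

section \<open>Centers and contraction\<close>

lemma relpow_refl_mono:
  assumes refl: "\<And>i. (i, i) \<in> E"
  shows "(c, v) \<in> E ^^ m \<Longrightarrow> m \<le> n \<Longrightarrow> (c, v) \<in> E ^^ n"
proof (induction n)
  case 0
  then show ?case by simp
next
  case (Suc n)
  show ?case
  proof (cases "m = Suc n")
    case False
    with Suc have "(c, v) \<in> E ^^ n"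
      by simp
    with refl[of v] show ?thesis
      by auto
  qed (use Suc in simp)
qed

lemma center_reaches_all_in_radius:
  fixes E :: "('n::finite \<times> 'n) set"
  assumes refl: "\<And>i. (i, i) \<in> E" and "quasi_strongly_connected E"
  obtains c where "\<And>v. (c, v) \<in> E ^^ radius E"
proof -
  let ?S = "(\<lambda>c. Max (range (gdist E c))) ` {c. is_center E c}"
  have "?S \<noteq> {}"
    using assms(2) unfolding quasi_strongly_connected_def by auto
  hence "radius E \<in> ?S"
    unfolding radius_def by (intro Min_in) auto
  then obtain c where c: "is_center E c" "radius E = Max (range (gdist E c))"
    by auto
  have "(c, v) \<in> E ^^ radius E" for v
  proof -
    have "\<exists>k. (c, v) \<in> E ^^ k"
      using c(1) unfolding is_center_def reachable_def by (simp add: rtrancl_power)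
    hence "(c, v) \<in> E ^^ gdist E c v"
      unfolding gdist_def by (rule LeastI_ex)
    moreover have "gdist E c v \<le> radius E"
      unfolding c(2) by (intro Max_ge) auto
    ultimately show ?thesis
      using relpow_refl_mono[OF refl] by blast
  qed
  then show ?thesis
    using that by blast
qed

lemma osc_left_prod_decay:
  assumes stoch: "\<And>t. row_stochastic (A t)" and "0 \<le> \<epsilon>" "\<epsilon> \<le> 1"
    and lower: "\<And>t i j. (j, i) \<in> E \<Longrightarrow> \<epsilon> \<le> A t $ i $ j"
    and center: "\<And>v. (c, v) \<in> E ^^ r"
  shows "osc (left_prod A t (q * r) *v y) \<le> (1 - \<epsilon> ^ r) ^ q * osc y"
proof (induction q arbitrary: t y)
  case 0
  then show ?case by simp
next
  case (Suc q)
  have "osc (left_prod A t (Suc q * r) *v y)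
      = osc (left_prod A (t + r) (q * r) *v (left_prod A t r *v y))"
    using left_prod_add[of A t r "q * r"] by (simp add: matrix_vector_mul_assoc)
  also have "\<dots> \<le> (1 - \<epsilon> ^ r) ^ q * osc (left_prod A t r *v y)"
    by (rule Suc.IH)
  also have "\<dots> \<le> (1 - \<epsilon> ^ r) ^ q * ((1 - \<epsilon> ^ r) * osc y)"
  proof (rule mult_left_mono)
    show "osc (left_prod A t r *v y) \<le> (1 - \<epsilon> ^ r) * osc y"
      using \<open>0 \<le> \<epsilon>\<close> left_prod_entry_ge_power[OF stoch \<open>0 \<le> \<epsilon>\<close> lower center]
      by (intro osc_mult_le row_stochastic_left_prod stoch) auto
    show "0 \<le> (1 - \<epsilon> ^ r) ^ q"
      using \<open>0 \<le> \<epsilon>\<close> \<open>\<epsilon> \<le> 1\<close> by (simp add: power_le_one)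
  qed
  finally show ?case
    by (simp add: mult_ac)
qed

lemma spec_norm_nonneg: "0 \<le> spec_norm W"
  unfolding spec_norm_def by (intro onorm_pos_le) auto

lemma norm_vector_matrix_mult_le:
  fixes W :: "real^'m::finite^'n::finite"
  shows "norm (x v* W) \<le> norm x * spec_norm W"
proof -
  let ?v = "x v* W"
  have "norm ?v ^ 2 = inner x (W *v ?v)"
    by (simp add: dot_lmul_matrix power2_norm_eq_inner)
  also have "\<dots> \<le> norm x * norm (W *v ?v)"
    by (rule norm_cauchy_schwarz)
  also have "\<dots> \<le> norm x * (spec_norm W * norm ?v)"
    unfolding spec_norm_def by (intro mult_left_mono onorm) auto
  finally have "norm ?v * norm ?v \<le> (norm x * spec_norm W) * norm ?v"
    by (simp add: power2_eq_square mult_ac)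
  then show ?thesis
    using spec_norm_nonneg[of W] by (cases "norm ?v = 0") (auto simp: mult_le_cancel_right)
qed

lemma row_matrix_mult: "(Y ** W) $ i = Y $ i v* W"
  by (simp add: matrix_matrix_mult_def vector_matrix_mult_def vec_eq_iff mult.commute)

lemma column_matrix_mult: "column j (P ** Y) = P *v column j Y"
  by (simp add: column_def matrix_matrix_mult_def matrix_vector_mult_def vec_eq_iff)

lemma mu_le_column_osc:
  fixes Y :: "real^'d::finite^'n::finite" and W :: "real^'e::finite^'d"
  assumes W: "\<And>x. norm (x v* W) \<le> b * norm x" and "0 \<le> b"
  shows "mu (Y ** W) \<le> real CARD('n) * b * (\<Sum>j\<in>UNIV. osc (column j Y))"
proof -
  let ?Z = "Y ** W"
  let ?N = "real CARD('n)"
  let ?S = "\<Sum>j\<in>UNIV. osc (column j Y)"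
  define D where "D = (\<chi> i j. ?Z $ i $ j - (\<Sum>k\<in>UNIV. ?Z $ k $ j) / ?N)"
  have D_row: "D $ i = (1 / ?N) *\<^sub>R (\<Sum>k\<in>UNIV. ?Z $ i - ?Z $ k)" for i
  proof -
    have "D $ i $ j = (1 / ?N) * (\<Sum>k\<in>UNIV. ?Z $ i $ j - ?Z $ k $ j)" for j
      unfolding D_def by (simp add: sum_subtractf field_simps)
    thus ?thesis
      by (simp add: vec_eq_iff sum_component)
  qed
  have row_diff: "norm (?Z $ i - ?Z $ k) \<le> b * ?S" for i k
  proof -
    have "norm (?Z $ i - ?Z $ k) = norm ((Y $ i - Y $ k) v* W)"
      by (simp add: row_matrix_mult vector_matrix_mult_diff_distrib)
    also have "\<dots> \<le> b * norm (Y $ i - Y $ k)"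
      by (rule W)
    also have "norm (Y $ i - Y $ k) \<le> (\<Sum>j\<in>UNIV. \<bar>(Y $ i - Y $ k) $ j\<bar>)"
      by (rule norm_le_l1_cart)
    also have "\<dots> \<le> ?S"
    proof (rule sum_mono)
      show "\<bar>(Y $ i - Y $ k) $ j\<bar> \<le> osc (column j Y)" for j
        using abs_diff_le_osc[of "column j Y" i k] by (simp add: column_def)
    qed
    finally show ?thesis
      using \<open>0 \<le> b\<close> by (simp add: mult_left_mono)
  qed
  have D_row_le: "norm (D $ i) \<le> b * ?S" for i
  proof -
    have "norm (D $ i) \<le> (1 / ?N) * (\<Sum>k\<in>UNIV. norm (?Z $ i - ?Z $ k))"
      unfolding D_row by (simp add: divide_right_mono norm_sum)
    also have "\<dots> \<le> (1 / ?N) * (\<Sum>k\<in>(UNIV::'n set). b * ?S)"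
      by (intro mult_left_mono sum_mono row_diff) simp
    also have "\<dots> = b * ?S"
      by simp
    finally show ?thesis .
  qed
  have "norm D \<le> (\<Sum>i\<in>UNIV. norm (D $ i))"
    unfolding norm_vec_def by (rule L2_set_le_sum) simp
  also have "\<dots> \<le> (\<Sum>i\<in>(UNIV::'n set). b * ?S)"
    by (intro sum_mono D_row_le)
  finally show ?thesis
    unfolding mu_def D_def[symmetric] by simp
qed

lemma power_div_le_powr:
  assumes "0 < \<rho>" "\<rho> \<le> 1" "0 < r"
  shows "\<rho> ^ (t div r) \<le> \<rho> powr (real t / real r) / \<rho>"
proof -
  have "t < r + r * (t div r)"
    using \<open>0 < r\<close> by (rule dividend_less_times_div)
  then have "real t < (real (t div r) + 1) * real r"
    by (simp add: algebra_simps flip: of_nat_mult of_nat_add)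
  then have "real t / real r - 1 \<le> real (t div r)"
    using \<open>0 < r\<close> by (simp add: field_simps)
  then have "\<rho> ^ (t div r) \<le> \<rho> powr (real t / real r - 1)"
    using assms by (simp add: powr_realpow[symmetric] powr_mono')
  also have "\<dots> = \<rho> powr (real t / real r) / \<rho>"
    using \<open>0 < \<rho>\<close> by (simp add: powr_diff)
  finally show ?thesis .
qed

section \<open>The attention dynamics\<close>

definition mat_prod_less :: "(nat \<Rightarrow> real^'d^'d) \<Rightarrow> nat \<Rightarrow> real^'d^'d" where
  "mat_prod_less W t = (if t = 0 then mat 1 else mat_prod_upto W (t - 1))"

lemma mat_prod_less_Suc: "mat_prod_less W (Suc t) = mat_prod_less W t ** W t"
  by (cases t) (simp_all add: mat_prod_less_def)

lemma trajectory_factorization: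
  assumes "\<And>t. X (Suc t) = A t ** X t ** W t"
  shows "X t = left_prod A 0 t ** X 0 ** mat_prod_less W t"
proof (induction t)
  case 0
  then show ?case by (simp add: mat_prod_less_def)
next
  case (Suc t)
  then show ?case
    using assms[of t] by (simp add: mat_prod_less_Suc matrix_mul_assoc)
qed

lemma bounded_mat_prod_less:
  fixes W :: "nat \<Rightarrow> real^'d::finite^'d"
  assumes "bounded (range (\<lambda>k. spec_norm (mat_prod_upto W k)))"
  obtains b where "1 \<le> b" "\<And>t x. norm (x v* mat_prod_less W t) \<le> b * norm x"
proof -
  obtain b0 where b0: "\<And>k. norm (spec_norm (mat_prod_upto W k)) \<le> b0"
    using assms unfolding bounded_iff by auto
  have "norm (x v* mat_prod_less W t) \<le> max 1 b0 * norm x" for t x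
  proof (cases t)
    case (Suc s)
    have "norm (x v* mat_prod_less W t) \<le> norm x * spec_norm (mat_prod_upto W s)"
      using Suc by (simp add: mat_prod_less_def norm_vector_matrix_mult_le)
    also have "\<dots> \<le> norm x * max 1 b0"
      using b0[of s] by (intro mult_left_mono) auto
    finally show ?thesis
      by (simp add: mult.commute)
  qed (simp add: mat_prod_less_def mult_le_cancel_right1)
  then show ?thesis
    using that[of "max 1 b0"] by simp
qed

lemma matrix_mult_transpose_entry: "(P ** transpose Q) $ i $ j = inner (P $ i) (Q $ j)"
  by (simp add: matrix_matrix_mult_def transpose_def inner_vec_def)

lemma trajectory_row_norm_le:
  fixes Y :: "real^'d::finite^'n::finite" and W :: "nat \<Rightarrow> real^'e::finite^'d"
  assumes stoch: "\<And>t. row_stochastic (A t)" and W: "\<And>t x. norm (x v* W t) \<le> b * norm x"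
    and "0 \<le> b"
  shows "norm ((left_prod A 0 t ** Y ** W t) $ i) \<le> b * Max (range (\<lambda>k. norm (Y $ k)))"
proof -
  have "norm ((left_prod A 0 t ** Y ** W t) $ i) \<le> b * norm ((left_prod A 0 t ** Y) $ i)"
    unfolding row_matrix_mult by (rule W)
  also have "norm ((left_prod A 0 t ** Y) $ i) \<le> Max (range (\<lambda>k. norm (Y $ k)))"
    unfolding matrix_mult_row_eq_sum
    by (intro row_stochastic_convex_comb_norm_le row_stochastic_left_prod stoch) auto
  finally show ?thesis
    using \<open>0 \<le> b\<close> by (simp add: mult_left_mono)
qed

lemma attn_logit_abs_le:
  fixes X :: "real^'d::finite^'n::finite" and WQ WK :: "real^'k::finite^'d"
  assumes "0 < dQK" and rows: "\<And>i. norm (X $ i) \<le> B"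
    and "spec_norm WQ \<le> C" "spec_norm WK \<le> C"
  shows "\<bar>((1 / sqrt dQK) *\<^sub>R ((X ** WQ) ** transpose (X ** WK))) $ i $ j\<bar> \<le> (B * C) ^ 2 / sqrt dQK"
proof -
  have row_le: "norm ((X ** W) $ l) \<le> B * C" if "spec_norm W \<le> C" for W :: "real^'k^'d" and l
  proof -
    have "norm ((X ** W) $ l) \<le> norm (X $ l) * spec_norm W"
      by (simp add: row_matrix_mult norm_vector_matrix_mult_le)
    also have "\<dots> \<le> B * C"
      using rows[of l] norm_ge_zero[of "X $ l"] spec_norm_nonneg[of W] that
      by (intro mult_mono) linarith+
    finally show ?thesis .
  qed
  have "\<bar>inner ((X ** WQ) $ i) ((X ** WK) $ j)\<bar> \<le> norm ((X ** WQ) $ i) * norm ((X ** WK) $ j)"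
    by (rule Cauchy_Schwarz_ineq2)
  also have "\<dots> \<le> (B * C) * (B * C)"
    using row_le[OF assms(3), of i] row_le[OF assms(4), of j]
    by (intro mult_mono) (auto intro: order_trans[OF norm_ge_zero])
  finally show ?thesis
    using \<open>0 < dQK\<close>
    by (simp add: matrix_mult_transpose_entry abs_mult divide_right_mono power2_eq_square)
qed

lemma masked_softmax_ge:
  fixes E :: "('n::finite \<times> 'n) set"
  assumes refl: "\<And>i. (i, i) \<in> E" and bound: "\<And>i j. \<bar>R $ i $ j\<bar> \<le> K" and "(j, i) \<in> E"
  shows "exp (- K) / (real CARD('n) * exp K) \<le> masked_softmax E R $ i $ j"
proof -
  let ?D = "\<Sum>k\<in>{k. (k, i) \<in> E}. exp (R $ i $ k)"
  have D_pos: "0 < ?D"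
    by (rule sum_pos2[of _ i]) (use refl in auto)
  have "?D \<le> (\<Sum>k\<in>{k. (k, i) \<in> E}. exp K)"
    by (intro sum_mono) (use bound abs_le_D1 in auto)
  also have "\<dots> \<le> (\<Sum>k\<in>(UNIV::'n set). exp K)"
    by (intro sum_mono2) auto
  finally have "?D \<le> real CARD('n) * exp K"
    by simp
  moreover have "exp (- K) \<le> exp (R $ i $ j)"
    using bound[of i j] by auto
  ultimately have "exp (- K) / (real CARD('n) * exp K) \<le> exp (R $ i $ j) / ?D"
    using D_pos by (intro frac_le) auto
  then show ?thesis
    using \<open>(j, i) \<in> E\<close> unfolding masked_softmax_def by simp
qed

lemma attn_matrix_uniform_lower_bound:
  fixes E :: "('n::finite \<times> 'n) set" and X :: "nat \<Rightarrow> real^'d::finite^'n"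
    and WQ WK :: "nat \<Rightarrow> real^'k::finite^'d"
  assumes "0 < dQK" "\<And>i. (i, i) \<in> E" "\<And>t i. norm (X t $ i) \<le> B"
    and "\<And>t. spec_norm (WQ t) \<le> C" "\<And>t. spec_norm (WK t) \<le> C"
  obtains \<epsilon> where "0 < \<epsilon>" "\<epsilon> \<le> 1 / 2"
    "\<And>t i j. (j, i) \<in> E \<Longrightarrow> \<epsilon> \<le> attn_matrix E dQK (X t) (WQ t) (WK t) $ i $ j"
proof
  define K where "K = (B * C) ^ 2 / sqrt dQK"
  show "0 < min (exp (- K) / (real CARD('n) * exp K)) (1 / 2)"
    by simp
  show "min (exp (- K) / (real CARD('n) * exp K)) (1 / 2) \<le> 1 / 2"
    by (rule min.cobounded2)
  fix t i j
  assume "(j, i) \<in> E"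
  then have "exp (- K) / (real CARD('n) * exp K) \<le> attn_matrix E dQK (X t) (WQ t) (WK t) $ i $ j"
    unfolding attn_matrix_def K_def using assms
    by (intro masked_softmax_ge attn_logit_abs_le) auto
  then show "min (exp (- K) / (real CARD('n) * exp K)) (1 / 2)
      \<le> attn_matrix E dQK (X t) (WQ t) (WK t) $ i $ j"
    by linarith
qed

lemma mu_exponential_decay:
  fixes A :: "nat \<Rightarrow> real^'n::finite^'n" and Y :: "real^'d::finite^'n"
    and W :: "nat \<Rightarrow> real^'e::finite^'d"
  assumes stoch: "\<And>t. row_stochastic (A t)" and "0 < \<epsilon>" "\<epsilon> \<le> 1 / 2"
    and lower: "\<And>t i j. (j, i) \<in> E \<Longrightarrow> \<epsilon> \<le> A t $ i $ j"
    and center: "\<And>v. (c, v) \<in> E ^^ r"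
    and W: "\<And>t x. norm (x v* W t) \<le> b * norm x" and "0 \<le> b"
  shows "\<exists>C>0. \<forall>t. mu (left_prod A 0 t ** Y ** W t) \<le> C * (1 - \<epsilon> ^ r) powr (real t / real r)"
proof (cases "r = 0")
  case True
  then have "(UNIV :: 'n set) = {c}"
    using center by (metis relpow_0_E UNIV_eq_I singletonI)
  then have "range (\<lambda>i. y $ i) = {y $ c}" for y :: "real^'n"
    by (metis image_empty image_insert)
  then have "osc y = 0" for y :: "real^'n"
    unfolding osc_def by simp
  then have "mu (left_prod A 0 t ** Y ** W t) \<le> 0" for t
    using mu_le_column_osc[OF W \<open>0 \<le> b\<close>, of "left_prod A 0 t ** Y" t] by simp
  then show ?thesis
    using True by (intro exI[of _ 1]) simp
next
  case False
  define \<rho> where "\<rho> = 1 - \<epsilon> ^ r"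
  have "\<epsilon> ^ r \<le> \<epsilon>"
    using False \<open>0 < \<epsilon>\<close> \<open>\<epsilon> \<le> 1 / 2\<close> power_decreasing[of 1 r \<epsilon>] by simp
  then have \<rho>: "0 < \<rho>" "\<rho> \<le> 1"
    unfolding \<rho>_def using \<open>0 < \<epsilon>\<close> \<open>\<epsilon> \<le> 1 / 2\<close> by auto
  define S where "S = (\<Sum>j\<in>UNIV. osc (column j Y))"
  have "0 \<le> S"
    unfolding S_def by (intro sum_nonneg osc_nonneg)
  define C where "C = real CARD('n) * b * S / \<rho> + 1"
  have "mu (left_prod A 0 t ** Y ** W t) \<le> C * \<rho> powr (real t / real r)" for t
  proof -
    have osc_column: "osc (column j (left_prod A 0 t ** Y)) \<le> \<rho> ^ (t div r) * osc (column j Y)" for j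
    proof -
      have "left_prod A 0 t = left_prod A (t mod r) (t div r * r) ** left_prod A 0 (t mod r)"
        using left_prod_add[of A 0 "t mod r" "t div r * r"] by simp
      then have "osc (column j (left_prod A 0 t ** Y))
          = osc (left_prod A (t mod r) (t div r * r) *v (left_prod A 0 (t mod r) *v column j Y))"
        by (simp add: column_matrix_mult matrix_vector_mul_assoc)
      also have "\<dots> \<le> \<rho> ^ (t div r) * osc (left_prod A 0 (t mod r) *v column j Y)"
        unfolding \<rho>_def using \<open>0 < \<epsilon>\<close> \<open>\<epsilon> \<le> 1 / 2\<close>
        by (intro osc_left_prod_decay[OF stoch _ _ lower center]) auto
      also have "\<dots> \<le> \<rho> ^ (t div r) * osc (column j Y)"
        using \<rho> by (intro mult_left_mono osc_row_stochastic_mult_le row_stochastic_left_prod stoch) auto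
      finally show ?thesis .
    qed
    have "mu (left_prod A 0 t ** Y ** W t)
        \<le> real CARD('n) * b * (\<Sum>j\<in>UNIV. osc (column j (left_prod A 0 t ** Y)))"
      by (rule mu_le_column_osc[OF W \<open>0 \<le> b\<close>])
    also have "\<dots> \<le> real CARD('n) * b * (\<rho> ^ (t div r) * S)"
      unfolding S_def sum_distrib_left using \<open>0 \<le> b\<close>
      by (intro mult_left_mono sum_mono osc_column) auto
    also have "\<dots> \<le> real CARD('n) * b * (\<rho> powr (real t / real r) / \<rho> * S)"
      using power_div_le_powr[OF \<rho>] False \<open>0 \<le> b\<close> \<open>0 \<le> S\<close>
      by (intro mult_left_mono mult_right_mono) auto
    also have "\<dots> \<le> C * \<rho> powr (real t / real r)"
      unfolding C_def by (simp add: algebra_simps)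
    finally show ?thesis .
  qed
  moreover have "0 < C"
    unfolding C_def using \<rho> \<open>0 \<le> b\<close> \<open>0 \<le> S\<close> by (intro add_nonneg_pos) auto
  ultimately show ?thesis
    unfolding \<rho>_def by blast
qed

theorem theorem1:
  fixes E :: "('n::finite \<times> 'n) set"
    and dQK :: real
    and WQ WK :: "nat \<Rightarrow> real^'k::finite^'d::finite"
    and WV :: "nat \<Rightarrow> real^'d^'d"
    and X :: "nat \<Rightarrow> real^'d^'n"
  assumes dQK_pos: "dQK > 0"
    and dyn: "\<And>t. X (Suc t) = attn_matrix E dQK (X t) (WQ t) (WK t) ** X t ** WV t"
    and A1: "\<And>i. (i, i) \<in> E"
    and A2: "\<exists>C'. \<forall>t. max (spec_norm (WQ t)) (spec_norm (WK t)) \<le> C'"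
    and A3: "bounded (range (\<lambda>k. spec_norm (mat_prod_upto WV k)))"
    and qsc: "quasi_strongly_connected E"
    and r_def: "r = radius E"
  shows "\<exists>\<epsilon>>0. (\<forall>t i j. (j, i) \<in> E \<longrightarrow> attn_matrix E dQK (X t) (WQ t) (WK t) $ i $ j \<ge> \<epsilon>)
              \<and> (\<exists>C>0. \<forall>t. mu (X t) \<le> C * (1 - \<epsilon> ^ r) powr (real t / real r))"
proof -
  define A where "A t = attn_matrix E dQK (X t) (WQ t) (WK t)" for t
  have stoch: "row_stochastic (A t)" for t
    unfolding A_def attn_matrix_def by (rule row_stochastic_masked_softmax[OF A1])
  have X: "X t = left_prod A 0 t ** X 0 ** mat_prod_less WV t" for t
    using dyn by (intro trajectory_factorization) (simp add: A_def)
  obtain b where b: "1 \<le> b" "\<And>t x. norm (x v* mat_prod_less WV t) \<le> b * norm x"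
    using bounded_mat_prod_less[OF A3] by blast
  have "norm (X t $ i) \<le> b * Max (range (\<lambda>k. norm (X 0 $ k)))" for t i
    using trajectory_row_norm_le[OF stoch b(2)] b(1) by (subst X) simp
  moreover obtain C' where "\<And>t. spec_norm (WQ t) \<le> C'" "\<And>t. spec_norm (WK t) \<le> C'"
    using A2 by auto
  ultimately obtain \<epsilon> where \<epsilon>: "0 < \<epsilon>" "\<epsilon> \<le> 1 / 2" "\<And>t i j. (j, i) \<in> E \<Longrightarrow> \<epsilon> \<le> A t $ i $ j"
    unfolding A_def
    by (rule attn_matrix_uniform_lower_bound[where X = X and WQ = WQ and WK = WK, OF dQK_pos A1])
      blast
  obtain c where "\<And>v. (c, v) \<in> E ^^ r"
    using center_reaches_all_in_radius[OF A1 qsc] r_def by blast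
  then have "\<exists>C>0. \<forall>t. mu (left_prod A 0 t ** X 0 ** mat_prod_less WV t)
      \<le> C * (1 - \<epsilon> ^ r) powr (real t / real r)"
    using b by (intro mu_exponential_decay[OF stoch \<epsilon>]) auto
  then show ?thesis
    using \<epsilon> unfolding A_def X[symmetric] by blast
qed

end
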